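(* Let $E$ be finite, $X_+=E^{\mathbb{Z}_+}$, $X=E^{\mathbb{Z}}$, and let $\phi\in C(X_+)$ be such that there exists a translation-invariant uniformly absolutely convergent interaction $\Phi$ on $\mathbb{Z}$ with $\phi=-\sum_{0\in V\Subset\mathbb{Z}_+}\Phi_V$. Then $\phi$ satisfies the extensibility condition, and $\overset{\rightleftharpoons}{\gamma}^{\phi}=\gamma^{\Phi}$.
   Context: An interaction is a family $\Phi=(\Phi_\Lambda)_{\Lambda\Subset\mathbb{Z}}$ of functions on $X$ with $\Phi_\Lambda$ depending only on coordinates in $\Lambda$; it is uniformly absolutely convergent (UAC) if $\sup_i\sum_{V\ni i}\|\Phi_V\|_\infty<\infty$, and translation-invariant if $\Phi_{\Lambda+k}=\Phi_\Lambda\circ S^k$ ($S$ the left shift). Its Gibbsian specification is $\gamma^\Phi_\Lambda(\omega_\Lambda|\eta_{\Lambda^c})=e^{-H^\Phi_\Lambda(\omega_\Lambda\eta_{\Lambda^c})}/\sum_{\bar\omega_\Lambda}e^{-H^\Phi_\Lambda(\bar\omega_\Lambda\eta_{\Lambda^c})}$ with $H^\Phi_\Lambda=\sum_{V\cap\Lambda\ne\emptyset}\Phi_V$. $S_n\phi=\sum_{k=0}^{n-1}\phi\circ S^k$; strings like $x_{-n}^{-1}ax_1^\infty$ are viewed in $X_+$ by re-indexing the first coordinate as $0$. Extensibility condition: for all $a_0,b_0\in E$, $\sum_{i=0}^n(\phi(x_{-i}^{-1}b_0x_1^\infty)-\phi(x_{-i}^{-1}a_0x_1^\infty))$ converges uniformly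 in $x\in X$. For extensible $\phi$, $\overset{\rightleftharpoons}{\gamma}^{\phi}$ is the unique translation-invariant quasilocal non-null specification on $X$ with single-site kernels $\lim_{p\to\infty}e^{S_{i+p+1}\phi(\omega_{-p}^{i-1}\sigma_i\omega_{i+1}^\infty)}/\sum_{\bar\omega_i}e^{S_{i+p+1}\phi(\omega_{-p}^{i-1}\bar\omega_i\omega_{i+1}^\infty)}$. *)

theory Defs
  imports "HOL-Analysis.Analysis"
begin

(* Configuration spaces: X = E^Z is  int => 'e,  X_+ = E^{Z_+} is  nat => 'e,
   E is a finite type 'e.  Both carry the product of discrete topologies. *)

definition prodtop_pos :: "(nat \<Rightarrow> 'e) topology" where
  "prodtop_pos = product_topology (\<lambda>_. discrete_topology UNIV) UNIV"

definition prodtop :: "(int \<Rightarrow> 'e) topology" where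
  "prodtop = product_topology (\<lambda>_. discrete_topology UNIV) UNIV"

definition shiftZ :: "int \<Rightarrow> (int \<Rightarrow> 'e) \<Rightarrow> (int \<Rightarrow> 'e)" where
  "shiftZ k x = (\<lambda>i. x (i + k))"

definition shiftN :: "nat \<Rightarrow> (nat \<Rightarrow> 'e) \<Rightarrow> (nat \<Rightarrow> 'e)" where
  "shiftN k y = (\<lambda>n. y (n + k))"

definition Ssum :: "((nat \<Rightarrow> 'e) \<Rightarrow> real) \<Rightarrow> nat \<Rightarrow> (nat \<Rightarrow> 'e) \<Rightarrow> real" where
  "Ssum phi n y = (\<Sum>k<n. phi (shiftN k y))"

definition supnorm :: "('a \<Rightarrow> real) \<Rightarrow> real" where
  "supnorm f = (SUP x. \<bar>f x\<bar>)"

definition is_interaction :: "(int set \<Rightarrow> (int \<Rightarrow> 'e) \<Rightarrow> real) \<Rightarrow> bool" where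
  "is_interaction Phi \<longleftrightarrow>
     (\<forall>V x y. finite V \<longrightarrow> (\<forall>i\<in>V. x i = y i) \<longrightarrow> Phi V x = Phi V y)"

definition uac :: "(int set \<Rightarrow> (int \<Rightarrow> 'e) \<Rightarrow> real) \<Rightarrow> bool" where
  "uac Phi \<longleftrightarrow> (\<exists>C. \<forall>i.
      (\<lambda>V. supnorm (Phi V)) summable_on {V. finite V \<and> i \<in> V} \<and>
      (\<Sum>\<^sub>\<infinity>V\<in>{V. finite V \<and> i \<in> V}. supnorm (Phi V)) \<le> C)"

definition trans_inv_interaction :: "(int set \<Rightarrow> (int \<Rightarrow> 'e) \<Rightarrow> real) \<Rightarrow> bool" where
  "trans_inv_interaction Phi \<longleftrightarrow>
     (\<forall>L k. finite L \<longrightarrow> Phi ((\<lambda>i. i + k) ` L) = (\<lambda>x. Phi L (shiftZ k x)))"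

definition splice :: "int set \<Rightarrow> (int \<Rightarrow> 'e) \<Rightarrow> (int \<Rightarrow> 'e) \<Rightarrow> (int \<Rightarrow> 'e)" where
  "splice L w e = (\<lambda>j. if j \<in> L then w j else e j)"

definition hamiltonian :: "(int set \<Rightarrow> (int \<Rightarrow> 'e) \<Rightarrow> real) \<Rightarrow> int set \<Rightarrow> (int \<Rightarrow> 'e) \<Rightarrow> real" where
  "hamiltonian Phi L x = (\<Sum>\<^sub>\<infinity>V\<in>{V. finite V \<and> V \<inter> L \<noteq> {}}. Phi V x)"

(* A specification is represented by its point probabilities:
   gam L w e = gamma_Lambda(omega_Lambda | eta_{Lambda^c})  (E finite);
   convention: value 0 for infinite Lambda. *)
definition gibbs_spec :: "(int set \<Rightarrow> (int \<Rightarrow> 'e) \<Rightarrow> real) \<Rightarrow> int set \<Rightarrow> (int \<Rightarrow> 'e) \<Rightarrow> (int \<Rightarrow> 'e) \<Rightarrow> real" where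
  "gibbs_spec Phi L w e =
     (if finite L then
        exp (- hamiltonian Phi L (splice L w e)) /
        (\<Sum>xi\<in>PiE L (\<lambda>_. UNIV). exp (- hamiltonian Phi L (splice L xi e)))
      else 0)"

definition is_spec :: "(int set \<Rightarrow> (int \<Rightarrow> 'e) \<Rightarrow> (int \<Rightarrow> 'e) \<Rightarrow> real) \<Rightarrow> bool" where
  "is_spec gam \<longleftrightarrow>
     (\<forall>L w e. infinite L \<longrightarrow> gam L w e = 0) \<and>
     (\<forall>L w w' e e'. finite L \<longrightarrow> (\<forall>j\<in>L. w j = w' j) \<longrightarrow> (\<forall>j. j \<notin> L \<longrightarrow> e j = e' j)
        \<longrightarrow> gam L w e = gam L w' e') \<and>
     (\<forall>L w e. finite L \<longrightarrow> gam L w e \<ge> 0) \<and>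
     (\<forall>L e. finite L \<longrightarrow> (\<Sum>xi\<in>PiE L (\<lambda>_. UNIV). gam L xi e) = 1) \<and>
     (\<forall>L D w e. finite D \<longrightarrow> L \<subseteq> D \<longrightarrow>
        gam D w e = (\<Sum>xi\<in>PiE L (\<lambda>_. UNIV). gam D (splice L xi w) e * gam L w (splice D w e)))"

definition quasilocal_spec :: "(int set \<Rightarrow> (int \<Rightarrow> 'e) \<Rightarrow> (int \<Rightarrow> 'e) \<Rightarrow> real) \<Rightarrow> bool" where
  "quasilocal_spec gam \<longleftrightarrow>
     (\<forall>L w. finite L \<longrightarrow> continuous_map prodtop euclideanreal (\<lambda>e. gam L w e))"

definition nonnull_spec :: "(int set \<Rightarrow> (int \<Rightarrow> 'e) \<Rightarrow> (int \<Rightarrow> 'e) \<Rightarrow> real) \<Rightarrow> bool" where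
  "nonnull_spec gam \<longleftrightarrow> (\<forall>L w e. finite L \<longrightarrow> gam L w e > 0)"

definition trans_inv_spec :: "(int set \<Rightarrow> (int \<Rightarrow> 'e) \<Rightarrow> (int \<Rightarrow> 'e) \<Rightarrow> real) \<Rightarrow> bool" where
  "trans_inv_spec gam \<longleftrightarrow>
     (\<forall>L k w e. finite L \<longrightarrow> gam ((\<lambda>i. i + k) ` L) w e = gam L (shiftZ k w) (shiftZ k e))"

(* the string x_{-i}^{-1} a x_1^infty viewed in X_+ (first coordinate re-indexed as 0) *)
definition ins_str :: "(int \<Rightarrow> 'e) \<Rightarrow> nat \<Rightarrow> 'e \<Rightarrow> (nat \<Rightarrow> 'e)" where
  "ins_str x i a = (\<lambda>n. if n = i then a else x (int n - int i))"

(* the string omega_{-p}^infty viewed in X_+ *)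
definition window :: "(int \<Rightarrow> 'e) \<Rightarrow> nat \<Rightarrow> (nat \<Rightarrow> 'e)" where
  "window w p = (\<lambda>n. w (int n - int p))"

definition extensible :: "((nat \<Rightarrow> 'e) \<Rightarrow> real) \<Rightarrow> bool" where
  "extensible phi \<longleftrightarrow>
     (\<forall>a0 b0. uniformly_convergent_on (UNIV :: (int \<Rightarrow> 'e) set)
        (\<lambda>n x. \<Sum>i\<le>n. phi (ins_str x i b0) - phi (ins_str x i a0)))"

definition ss_approx :: "((nat \<Rightarrow> 'e) \<Rightarrow> real) \<Rightarrow> int \<Rightarrow> 'e \<Rightarrow> (int \<Rightarrow> 'e) \<Rightarrow> nat \<Rightarrow> real" where
  "ss_approx phi i s w p =
     exp (Ssum phi (nat (i + int p + 1)) (window (w(i := s)) p)) /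
     (\<Sum>s'\<in>UNIV. exp (Ssum phi (nat (i + int p + 1)) (window (w(i := s')) p)))"

definition rev_spec :: "((nat \<Rightarrow> 'e::finite) \<Rightarrow> real) \<Rightarrow> int set \<Rightarrow> (int \<Rightarrow> 'e) \<Rightarrow> (int \<Rightarrow> 'e) \<Rightarrow> real" where
  "rev_spec phi = (THE gam. is_spec gam \<and> quasilocal_spec gam \<and> nonnull_spec gam \<and> trans_inv_spec gam \<and>
       (\<forall>i w e. (ss_approx phi i (w i) e \<longlongrightarrow> gam {i} w e) sequentially))"

end

theory Submission
  imports Defs
begin

(* Translation invariance turns phi o S^m into minus the energy of the finite sets whose minimum
   is m, so a Birkhoff sum of phi along a window is minus the energy of all sets with minimum in
   the window.  Changing the spin at a site i only affects the sets through i: in the ratio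
   defining the single-site kernel the energy of all other sets cancels, and what remains, the
   energy of the sets through i lying to the right of the left end of the window, converges
   uniformly to H_{i} by uniform absolute convergence.  The same computation shows that the
   extensibility sums converge uniformly.  Finally, a non-null specification is determined by its
   single-site kernels, so gamma^Phi is the only specification matching the definition of the
   reversed specification. *)

lemma summable_on_tail_bound:
  fixes f :: "'a \<Rightarrow> real"
  assumes "f summable_on A" "\<And>x. x \<in> A \<Longrightarrow> f x \<ge> 0" "\<epsilon> > 0"
  obtains F where "finite F" "F \<subseteq> A" "\<And>B. B \<subseteq> A - F \<Longrightarrow> infsum f B \<le> \<epsilon>"
proof -
  obtain F where F: "finite F" "F \<subseteq> A" "dist (sum f F) (infsum f A) \<le> \<epsilon>"
    using infsum_finite_approximation[OF assms(1,3)] by blast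
  have tail: "f summable_on (A - F)"
    using assms(1) summable_on_subset_banach by blast
  have "infsum f A = sum f F + infsum f (A - F)"
    using infsum_Un_disjoint[OF summable_on_finite[OF F(1)] tail] F(2)
    by (simp add: Un_absorb1 infsum_finite[OF F(1)])
  then have small: "infsum f (A - F) \<le> \<epsilon>"
    using F(3) by (simp add: dist_real_def)
  have "infsum f B \<le> \<epsilon>" if "B \<subseteq> A - F" for B
  proof -
    have "infsum f B \<le> infsum f (A - F)"
      using that tail summable_on_subset_banach assms(2)
      by (intro infsum_mono_neutral) auto
    with small show ?thesis by simp
  qed
  with F show thesis by (intro that)
qed

lemma openin_prodtop_cylinder:
  fixes x :: "int \<Rightarrow> 'e"
  assumes "finite N"
  shows "openin prodtop {y. \<forall>i\<in>N. y i = x i}"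
  using assms
proof (induction N rule: finite_induct)
  case empty
  then show ?case
    using openin_topspace[of prodtop] by (simp add: prodtop_def)
next
  case (insert i N)
  have "openin prodtop {y \<in> topspace prodtop. y i \<in> {x i}}"
    unfolding prodtop_def
    by (rule openin_continuous_map_preimage[OF continuous_map_product_projection]) auto
  then have "openin prodtop ({y \<in> topspace prodtop. y i \<in> {x i}} \<inter> {y. \<forall>i\<in>N. y i = x i})"
    using insert.IH by (rule openin_Int)
  moreover have "{y \<in> topspace prodtop. y i \<in> {x i}} \<inter> {y. \<forall>i\<in>N. y i = x i} = {y. \<forall>j\<in>insert i N. y j = x j}"
    by (auto simp: prodtop_def)
  ultimately show ?case by simp
qed

lemma continuous_map_prodtop_if_almost_local:
  fixes f :: "(int \<Rightarrow> 'e) \<Rightarrow> real"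
  assumes "\<And>\<epsilon>. \<epsilon> > 0 \<Longrightarrow> \<exists>N. finite N \<and> (\<forall>x y. (\<forall>i\<in>N. x i = y i) \<longrightarrow> \<bar>f x - f y\<bar> \<le> \<epsilon>)"
  shows "continuous_map prodtop euclideanreal f"
  unfolding continuous_map_atin limitin_canonical_iff
proof (intro ballI tendstoI)
  fix x \<epsilon> assume "(\<epsilon> :: real) > 0"
  then obtain N where N: "finite N" "\<And>x y. (\<forall>i\<in>N. x i = y i) \<Longrightarrow> \<bar>f x - f y\<bar> \<le> \<epsilon>/2"
    using assms[of "\<epsilon>/2"] by auto
  have "\<forall>y\<in>{y. \<forall>i\<in>N. y i = x i} - {x}. dist (f y) (f x) < \<epsilon>"
    using N(2) \<open>\<epsilon> > 0\<close> by (fastforce simp: dist_real_def)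
  then show "\<forall>\<^sub>F y in atin prodtop x. dist (f y) (f x) < \<epsilon>"
    unfolding eventually_atin using openin_prodtop_cylinder[OF N(1)] by blast
qed

section \<open>Specifications\<close>

definition partition_function ::
    "(int set \<Rightarrow> (int \<Rightarrow> 'e) \<Rightarrow> real) \<Rightarrow> int set \<Rightarrow> (int \<Rightarrow> 'e) \<Rightarrow> real" where
  "partition_function Phi L e = (\<Sum>xi\<in>PiE L (\<lambda>_. UNIV). exp (- hamiltonian Phi L (splice L xi e)))"

lemma partition_function_pos:
  fixes Phi :: "int set \<Rightarrow> (int \<Rightarrow> 'e::finite) \<Rightarrow> real"
  shows "finite L \<Longrightarrow> partition_function Phi L e > 0"
  unfolding partition_function_def by (rule sum_pos) (auto simp: finite_PiE PiE_eq_empty_iff)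

lemma gibbs_spec_eq:
  "finite L \<Longrightarrow> gibbs_spec Phi L w e = exp (- hamiltonian Phi L (splice L w e)) / partition_function Phi L e"
  by (simp add: gibbs_spec_def partition_function_def)

lemma gibbs_spec_pos:
  fixes Phi :: "int set \<Rightarrow> (int \<Rightarrow> 'e::finite) \<Rightarrow> real"
  shows "finite L \<Longrightarrow> gibbs_spec Phi L w e > 0"
  by (simp add: gibbs_spec_eq partition_function_pos)

lemma nonnull_gibbs_spec: "nonnull_spec (gibbs_spec (Phi :: int set \<Rightarrow> (int \<Rightarrow> 'e::finite) \<Rightarrow> real))"
  by (simp add: nonnull_spec_def gibbs_spec_pos)

lemma sum_gibbs_spec:
  fixes Phi :: "int set \<Rightarrow> (int \<Rightarrow> 'e::finite) \<Rightarrow> real"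
  assumes "finite L"
  shows "(\<Sum>xi\<in>PiE L (\<lambda>_. UNIV). gibbs_spec Phi L xi e) = 1"
  using partition_function_pos[OF assms, of Phi e]
  by (simp add: gibbs_spec_eq[OF assms] partition_function_def flip: sum_divide_distrib)

lemma gibbs_spec_singleton:
  fixes Phi :: "int set \<Rightarrow> (int \<Rightarrow> 'e) \<Rightarrow> real"
  shows "gibbs_spec Phi {i} w e =
     exp (- hamiltonian Phi {i} (e(i := w i))) / (\<Sum>s\<in>UNIV. exp (- hamiltonian Phi {i} (e(i := s))))"
proof -
  have splice_single: "splice {i} xi e = e(i := xi i)" for xi :: "int \<Rightarrow> 'e"
    by (auto simp: splice_def)
  have "bij_betw (\<lambda>xi. xi i) (PiE {i} (\<lambda>_. UNIV)) (UNIV :: 'e set)"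
    by (rule bij_betwI[where g = "\<lambda>s. (\<lambda>_. undefined)(i := s)"])
       (auto simp: PiE_def extensional_def fun_eq_iff)
  then have "partition_function Phi {i} e = (\<Sum>s\<in>UNIV. exp (- hamiltonian Phi {i} (e(i := s))))"
    unfolding partition_function_def splice_single by (rule sum.reindex_bij_betw)
  then show ?thesis by (simp add: gibbs_spec_eq splice_single)
qed

lemma
  fixes gam :: "int set \<Rightarrow> (int \<Rightarrow> 'e) \<Rightarrow> (int \<Rightarrow> 'e) \<Rightarrow> real"
  assumes "is_spec gam"
  shows is_spec_infinite: "infinite L \<Longrightarrow> gam L w e = 0"
    and is_spec_local: "finite L \<Longrightarrow> (\<And>j. j \<in> L \<Longrightarrow> w j = w' j) \<Longrightarrow> (\<And>j. j \<notin> L \<Longrightarrow> e j = e' j)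
           \<Longrightarrow> gam L w e = gam L w' e'"
    and is_spec_sum: "finite L \<Longrightarrow> (\<Sum>xi\<in>PiE L (\<lambda>_. UNIV). gam L xi e) = 1"
    and is_spec_consistent: "finite D \<Longrightarrow> L \<subseteq> D \<Longrightarrow>
           gam D w e = (\<Sum>xi\<in>PiE L (\<lambda>_. UNIV). gam D (splice L xi w) e * gam L w (splice D w e))"
  using assms unfolding is_spec_def by (elim conjE; meson)+

lemma is_spec_single_site_factor:
  fixes g :: "int set \<Rightarrow> (int \<Rightarrow> 'e) \<Rightarrow> (int \<Rightarrow> 'e) \<Rightarrow> real"
  assumes "is_spec g" "finite D" "j \<in> D"
  shows "g D w e = (\<Sum>xi\<in>PiE {j} (\<lambda>_. UNIV). g D (w(j := xi j)) e) * g {j} w (splice D w e)"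
proof -
  have "g D w e = (\<Sum>xi\<in>PiE {j} (\<lambda>_. UNIV). g D (splice {j} xi w) e * g {j} w (splice D w e))"
    using assms(3) by (intro is_spec_consistent[OF assms(1,2)]) simp
  also have "\<dots> = (\<Sum>xi\<in>PiE {j} (\<lambda>_. UNIV). g D (w(j := xi j)) e) * g {j} w (splice D w e)"
    unfolding sum_distrib_right
    by (intro sum.cong refl arg_cong2[where f = "(*)"] arg_cong[where f = "\<lambda>v. g D v e"])
       (auto simp: splice_def)
  finally show ?thesis .
qed

text \<open>The first factor above does not depend on the spin at site j, so two specifications with the
  same single-site kernels have a ratio that is invariant under single-site changes.\<close>

lemma nonnull_spec_ratio_update:
  fixes g1 g2 :: "int set \<Rightarrow> (int \<Rightarrow> 'e) \<Rightarrow> (int \<Rightarrow> 'e) \<Rightarrow> real"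
  assumes "is_spec g1" "is_spec g2" "nonnull_spec g2"
    and single: "\<And>i w e. g1 {i} w e = g2 {i} w e"
    and "finite D" "j \<in> D"
  shows "g1 D (w(j := s)) e / g2 D (w(j := s)) e = g1 D w e / g2 D w e"
proof -
  have "g1 D w e / g2 D w e = (\<Sum>xi\<in>PiE {j} (\<lambda>_. UNIV). g1 D (w(j := xi j)) e) /
      (\<Sum>xi\<in>PiE {j} (\<lambda>_. UNIV). g2 D (w(j := xi j)) e)" for w
  proof -
    have "g2 {j} w (splice D w e) > 0"
      using assms(3) by (simp add: nonnull_spec_def)
    then show ?thesis
      unfolding is_spec_single_site_factor[OF assms(1,5,6), of w]
        is_spec_single_site_factor[OF assms(2,5,6), of w] single
      by simp
  qed
  then show ?thesis by simp
qed

lemma nonnull_spec_eqI: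
  fixes g1 g2 :: "int set \<Rightarrow> (int \<Rightarrow> 'e) \<Rightarrow> (int \<Rightarrow> 'e) \<Rightarrow> real"
  assumes "is_spec g1" "is_spec g2" "nonnull_spec g2"
    and single: "\<And>i w e. g1 {i} w e = g2 {i} w e"
  shows "g1 = g2"
proof (intro ext)
  fix D :: "int set" and w e :: "int \<Rightarrow> 'e"
  show "g1 D w e = g2 D w e"
  proof (cases "finite D")
    case False
    then show ?thesis using is_spec_infinite[OF assms(1)] is_spec_infinite[OF assms(2)] by simp
  next
    case True
    define r where "r w = g1 D w e / g2 D w e" for w
    have r_splice: "r (splice F w' w) = r w" if "finite F" "F \<subseteq> D" for F w'
      using that
    proof (induction F rule: finite_induct)
      case (insert j F)
      have "splice (insert j F) w' w = (splice F w' w)(j := w' j)"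
        by (auto simp: splice_def)
      then show ?case
        using insert nonnull_spec_ratio_update[OF assms True, of j "splice F w' w" "w' j"]
        by (simp add: r_def del: fun_upd_apply)
    qed (simp add: splice_def)
    have "g D (splice D w' w) e = g D w' e" if "is_spec g" for g w'
      by (rule is_spec_local[OF that True]) (auto simp: splice_def)
    note splice_D = this[OF assms(1)] this[OF assms(2)]
    have "r (splice D w' w) = r w'" for w'
      by (simp add: r_def splice_D)
    with r_splice[OF True order_refl] have r_const: "r w' = r w" for w'
      by metis
    have pos: "g2 D v e > 0" for v
      using assms(3) True by (simp add: nonnull_spec_def)
    have g1_eq: "g1 D w' e = r w * g2 D w' e" for w'
      using r_const[of w'] pos[of w'] pos[of w] unfolding r_def by (simp add: field_simps)
    have "1 = (\<Sum>xi\<in>PiE D (\<lambda>_. UNIV). g1 D xi e)"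
      using is_spec_sum[OF assms(1) True] ..
    also have "\<dots> = r w * (\<Sum>xi\<in>PiE D (\<lambda>_. UNIV). g2 D xi e)"
      by (simp add: g1_eq sum_distrib_left)
    also have "\<dots> = r w" using is_spec_sum[OF assms(2) True] by simp
    finally show ?thesis using g1_eq[of w] by simp
  qed
qed

section \<open>Gibbsian specifications of UAC interactions\<close>

definition sets_meeting :: "int set \<Rightarrow> int set set" where
  "sets_meeting L = {V. finite V \<and> V \<inter> L \<noteq> {}}"

lemma hamiltonian_eq_infsum: "hamiltonian Phi L x = infsum (\<lambda>V. Phi V x) (sets_meeting L)"
  by (simp add: hamiltonian_def sets_meeting_def)

lemma sets_meeting_mono: "L \<subseteq> D \<Longrightarrow> sets_meeting L \<subseteq> sets_meeting D"
  by (auto simp: sets_meeting_def)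

lemma sets_meeting_translate:
  "sets_meeting ((\<lambda>i. i + k) ` L) = (\<lambda>V. (\<lambda>i. i + k) ` V) ` sets_meeting L"
proof (intro equalityI subsetI)
  fix W assume W: "W \<in> sets_meeting ((\<lambda>i. i + k) ` L)"
  have "W = (\<lambda>i. i + k) ` ((\<lambda>i. i - k) ` W)" by (auto simp: image_iff)
  moreover have "(\<lambda>i. i - k) ` W \<in> sets_meeting L" using W by (force simp: sets_meeting_def)
  ultimately show "W \<in> (\<lambda>V. (\<lambda>i. i + k) ` V) ` sets_meeting L" by blast
qed (auto simp: sets_meeting_def)

lemma splice_restrict: "splice L (restrict w L) e = splice L w e"
  by (auto simp: splice_def)

locale uac_interaction =
  fixes Phi :: "int set \<Rightarrow> (int \<Rightarrow> 'e::finite) \<Rightarrow> real"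
  assumes interaction: "is_interaction Phi" and uac: "uac Phi"
    and trans_inv: "trans_inv_interaction Phi"
begin

lemma Phi_cong: "finite V \<Longrightarrow> (\<And>i. i \<in> V \<Longrightarrow> x i = y i) \<Longrightarrow> Phi V x = Phi V y"
  using interaction unfolding is_interaction_def by blast

lemma Phi_translate: "finite L \<Longrightarrow> Phi ((\<lambda>i. i + k) ` L) x = Phi L (shiftZ k x)"
  using trans_inv unfolding trans_inv_interaction_def by metis

lemma abs_Phi_le_supnorm:
  assumes "finite V"
  shows "\<bar>Phi V x\<bar> \<le> supnorm (Phi V)"
proof -
  have "range (Phi V) \<subseteq> Phi V ` PiE V (\<lambda>_. UNIV)"
  proof
    fix z assume "z \<in> range (Phi V)"
    then obtain y where "z = Phi V y" by auto
    moreover have "Phi V y = Phi V (restrict y V)" by (rule Phi_cong[OF assms]) auto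
    ultimately show "z \<in> Phi V ` PiE V (\<lambda>_. UNIV)" by auto
  qed
  then have "finite (range (Phi V))" by (rule finite_subset) (simp add: assms finite_PiE)
  then have "finite (range (\<lambda>y. \<bar>Phi V y\<bar>))"
    by (metis finite_imageI image_image)
  then show ?thesis
    unfolding supnorm_def by (intro cSUP_upper) (auto intro: bdd_above_finite)
qed

lemma supnorm_nonneg: "finite V \<Longrightarrow> supnorm (Phi V) \<ge> 0"
  using abs_Phi_le_supnorm[of V undefined] by linarith

lemma supnorm_summable_on:
  assumes "finite L" "B \<subseteq> sets_meeting L"
  shows "(\<lambda>V. supnorm (Phi V)) summable_on B"
proof -
  have "(\<lambda>V. supnorm (Phi V)) summable_on sets_meeting L"
    using assms(1)
  proof (induction L rule: finite_induct)
    case empty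
    then show ?case by (simp add: sets_meeting_def)
  next
    case (insert i L)
    have "sets_meeting (insert i L) = {V. finite V \<and> i \<in> V} \<union> sets_meeting L"
      by (auto simp: sets_meeting_def)
    moreover have "(\<lambda>V. supnorm (Phi V)) summable_on {V. finite V \<and> i \<in> V}"
      using uac unfolding uac_def by blast
    ultimately show ?case using insert.IH by (simp add: summable_on_union)
  qed
  then show ?thesis using assms(2) summable_on_subset_banach by blast
qed

lemma Phi_summable_on:
  assumes "finite L" "B \<subseteq> sets_meeting L"
  shows "(\<lambda>V. Phi V x) summable_on B"
proof -
  have "(\<lambda>V. norm (Phi V x)) summable_on B"
    by (rule summable_on_comparison_test[OF supnorm_summable_on[OF assms]])
       (use assms abs_Phi_le_supnorm in \<open>auto simp: sets_meeting_def\<close>)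
  then show ?thesis using summable_on_iff_abs_summable_on_real by blast
qed

lemma abs_infsum_Phi_le:
  assumes "finite L" "B \<subseteq> sets_meeting L"
  shows "\<bar>infsum (\<lambda>V. Phi V x) B\<bar> \<le> infsum (\<lambda>V. supnorm (Phi V)) B"
proof -
  have "norm (Phi V x) \<le> supnorm (Phi V)" if "V \<in> B" for V
    using that assms(2) abs_Phi_le_supnorm by (auto simp: sets_meeting_def)
  with norm_infsum_le[OF has_sum_infsum[OF Phi_summable_on[OF assms]]
      has_sum_infsum[OF supnorm_summable_on[OF assms]]] show ?thesis
    by simp
qed

lemma infsum_Phi_split:
  assumes "finite L" "B \<subseteq> sets_meeting L" "C \<subseteq> B"
  shows "infsum (\<lambda>V. Phi V x) B = infsum (\<lambda>V. Phi V x) C + infsum (\<lambda>V. Phi V x) (B - C)"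
proof -
  have "(\<lambda>V. Phi V x) summable_on C" "(\<lambda>V. Phi V x) summable_on (B - C)"
    using assms by (auto intro: Phi_summable_on)
  then have "infsum (\<lambda>V. Phi V x) (C \<union> (B - C)) = infsum (\<lambda>V. Phi V x) C + infsum (\<lambda>V. Phi V x) (B - C)"
    by (rule infsum_Un_disjoint) blast
  with assms(3) show ?thesis by (simp add: Un_absorb1)
qed

lemma hamiltonian_split:
  assumes "finite D" "L \<subseteq> D"
  shows "hamiltonian Phi D (splice L xi x) =
           hamiltonian Phi L (splice L xi x) + infsum (\<lambda>V. Phi V x) (sets_meeting D - sets_meeting L)"
proof -
  have "infsum (\<lambda>V. Phi V (splice L xi x)) (sets_meeting D - sets_meeting L) =
        infsum (\<lambda>V. Phi V x) (sets_meeting D - sets_meeting L)"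
    by (intro infsum_cong Phi_cong) (auto simp: sets_meeting_def splice_def)
  then show ?thesis
    using infsum_Phi_split[OF assms(1) order_refl sets_meeting_mono[OF assms(2)]]
    by (simp add: hamiltonian_eq_infsum)
qed

lemma gibbs_spec_consistent:
  assumes "finite D" "L \<subseteq> D"
  shows "gibbs_spec Phi D w e =
           (\<Sum>xi\<in>PiE L (\<lambda>_. UNIV). gibbs_spec Phi D (splice L xi w) e * gibbs_spec Phi L w (splice D w e))"
proof -
  have fL: "finite L" using assms finite_subset by blast
  define x where "x = splice D w e"
  define R where "R = infsum (\<lambda>V. Phi V x) (sets_meeting D - sets_meeting L)"
  have x_eq: "splice D (splice L xi w) e = splice L xi x" "splice L w x = x" for xi
    using assms(2) by (auto simp: x_def splice_def fun_eq_iff)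
  have exp_H_D: "exp (- hamiltonian Phi D (splice L xi x)) = exp (- hamiltonian Phi L (splice L xi x)) * exp (- R)"
    for xi using hamiltonian_split[OF assms, of xi x] by (simp add: R_def flip: exp_add)
  have "(\<Sum>xi\<in>PiE L (\<lambda>_. UNIV). gibbs_spec Phi D (splice L xi w) e * gibbs_spec Phi L w (splice D w e))
      = (\<Sum>xi\<in>PiE L (\<lambda>_. UNIV). exp (- hamiltonian Phi L (splice L xi x))) *
          (exp (- R) / partition_function Phi D e * (exp (- hamiltonian Phi L x) / partition_function Phi L x))"
    unfolding sum_distrib_right
    by (intro sum.cong refl) (simp add: gibbs_spec_eq assms(1) fL x_eq exp_H_D mult_ac flip: x_def)
  also have "\<dots> = exp (- R) * exp (- hamiltonian Phi L x) / partition_function Phi D e"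
    using partition_function_pos[OF fL, of Phi x]
    by (simp add: partition_function_def[of Phi L x] field_simps)
  also have "\<dots> = gibbs_spec Phi D w e"
    using exp_H_D[of w] by (simp add: gibbs_spec_eq[OF assms(1)] x_eq flip: x_def)
  finally show ?thesis by simp
qed

lemma is_spec_gibbs_spec: "is_spec (gibbs_spec Phi)"
  unfolding is_spec_def
proof (intro conjI allI impI)
  fix L :: "int set" and w w' e e' :: "int \<Rightarrow> 'e"
  assume "finite L" "\<forall>j\<in>L. w j = w' j" "\<forall>j. j \<notin> L \<longrightarrow> e j = e' j"
  then have "splice L w e = splice L w' e'" "\<And>xi. splice L xi e = splice L xi e'"
    by (auto simp: splice_def)
  then show "gibbs_spec Phi L w e = gibbs_spec Phi L w' e'"
    by (simp add: gibbs_spec_def)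
next
  fix L :: "int set" and w e :: "int \<Rightarrow> 'e"
  show "infinite L \<Longrightarrow> gibbs_spec Phi L w e = 0"
    by (simp add: gibbs_spec_def)
  show "finite L \<Longrightarrow> gibbs_spec Phi L w e \<ge> 0"
    by (simp add: gibbs_spec_pos less_imp_le)
qed (simp_all add: sum_gibbs_spec gibbs_spec_consistent)

lemma hamiltonian_almost_local:
  assumes "finite L" "\<epsilon> > 0"
  obtains N where "finite N"
    "\<And>x y. (\<forall>i\<in>N. x i = y i) \<Longrightarrow> \<bar>hamiltonian Phi L x - hamiltonian Phi L y\<bar> \<le> \<epsilon>"
proof -
  obtain F where F: "finite F" "F \<subseteq> sets_meeting L"
    and tail: "\<And>B. B \<subseteq> sets_meeting L - F \<Longrightarrow> infsum (\<lambda>V. supnorm (Phi V)) B \<le> \<epsilon>/2"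
    using summable_on_tail_bound[OF supnorm_summable_on[OF assms(1) order_refl], of "\<epsilon>/2"]
      assms supnorm_nonneg by (auto simp: sets_meeting_def)
  have H_eq: "hamiltonian Phi L x = (\<Sum>V\<in>F. Phi V x) + infsum (\<lambda>V. Phi V x) (sets_meeting L - F)" for x
    using infsum_Phi_split[OF assms(1) order_refl F(2)] F(1) by (simp add: hamiltonian_eq_infsum)
  have small: "\<bar>infsum (\<lambda>V. Phi V x) (sets_meeting L - F)\<bar> \<le> \<epsilon>/2" for x
    using abs_infsum_Phi_le[OF assms(1), of "sets_meeting L - F" x] tail[of "sets_meeting L - F"] by auto
  show thesis
  proof
    show "finite (\<Union>F)" using F by (auto simp: sets_meeting_def)
    fix x y :: "int \<Rightarrow> 'e" assume "\<forall>i\<in>\<Union>F. x i = y i"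
    then have "(\<Sum>V\<in>F. Phi V x) = (\<Sum>V\<in>F. Phi V y)"
      using F(2) by (intro sum.cong refl Phi_cong) (auto simp: sets_meeting_def)
    then show "\<bar>hamiltonian Phi L x - hamiltonian Phi L y\<bar> \<le> \<epsilon>"
      using H_eq[of x] H_eq[of y] small[of x] small[of y] by linarith
  qed
qed

lemma quasilocal_gibbs_spec: "quasilocal_spec (gibbs_spec Phi)"
  unfolding quasilocal_spec_def
proof (intro allI impI)
  fix L :: "int set" and w :: "int \<Rightarrow> 'e" assume L: "finite L"
  have "continuous_map prodtop euclideanreal (\<lambda>e. hamiltonian Phi L (splice L xi e))" for xi
  proof (rule continuous_map_prodtop_if_almost_local)
    fix \<epsilon> :: real assume "\<epsilon> > 0"
    then obtain N where "finite N"
      "\<And>x y. (\<forall>i\<in>N. x i = y i) \<Longrightarrow> \<bar>hamiltonian Phi L x - hamiltonian Phi L y\<bar> \<le> \<epsilon>"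
      using hamiltonian_almost_local[OF L] by blast
    then show "\<exists>N. finite N \<and> (\<forall>x y. (\<forall>i\<in>N. x i = y i) \<longrightarrow>
        \<bar>hamiltonian Phi L (splice L xi x) - hamiltonian Phi L (splice L xi y)\<bar> \<le> \<epsilon>)"
      by (intro exI[of _ N]) (auto simp: splice_def)
  qed
  then have exp_cont: "continuous_map prodtop euclideanreal (\<lambda>e. exp (- hamiltonian Phi L (splice L xi e)))" for xi
    unfolding continuous_map_atin limitin_canonical_iff by (auto intro!: tendsto_intros)
  have "continuous_map prodtop euclideanreal (partition_function Phi L)"
    unfolding partition_function_def[abs_def] by (intro continuous_map_sum exp_cont) (simp add: L finite_PiE)
  with exp_cont show "continuous_map prodtop euclideanreal (gibbs_spec Phi L w)"
    unfolding gibbs_spec_eq[OF L, abs_def]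
    by (intro continuous_map_real_divide) (auto simp: partition_function_pos[OF L] less_imp_neq[symmetric])
qed

lemma hamiltonian_translate:
  "hamiltonian Phi ((\<lambda>i. i + k) ` L) x = hamiltonian Phi L (shiftZ k x)"
proof -
  have inj: "inj_on (\<lambda>V. (\<lambda>i. i + k) ` V) (sets_meeting L)"
    by (intro inj_onI) (metis add_right_imp_eq inj_image_eq_iff inj_onI)
  show ?thesis
    unfolding hamiltonian_eq_infsum sets_meeting_translate infsum_reindex[OF inj] o_def
    by (intro infsum_cong) (simp add: Phi_translate sets_meeting_def)
qed

lemma shiftZ_splice: "shiftZ k (splice ((\<lambda>i. i + k) ` L) w e) = splice L (shiftZ k w) (shiftZ k e)"
  by (auto simp: shiftZ_def splice_def fun_eq_iff)

lemma partition_function_translate: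
  "partition_function Phi ((\<lambda>i. i + k) ` L) e = partition_function Phi L (shiftZ k e)"
  unfolding partition_function_def
proof (rule sum.reindex_bij_witness[where j = "\<lambda>xi. restrict (shiftZ k xi) L"
      and i = "\<lambda>eta. restrict (shiftZ (-k) eta) ((\<lambda>i. i + k) ` L)"])
  fix a :: "int \<Rightarrow> 'e" assume a: "a \<in> PiE ((\<lambda>i. i + k) ` L) (\<lambda>_. UNIV)"
  show "restrict (shiftZ (- k) (restrict (shiftZ k a) L)) ((\<lambda>i. i + k) ` L) = a"
    using a by (auto simp: fun_eq_iff shiftZ_def restrict_def PiE_def extensional_def)
  show "exp (- hamiltonian Phi L (splice L (restrict (shiftZ k a) L) (shiftZ k e))) =
        exp (- hamiltonian Phi ((\<lambda>i. i + k) ` L) (splice ((\<lambda>i. i + k) ` L) a e))"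
    by (simp add: hamiltonian_translate shiftZ_splice splice_restrict)
next
  fix b :: "int \<Rightarrow> 'e" assume b: "b \<in> PiE L (\<lambda>_. UNIV)"
  show "restrict (shiftZ k (restrict (shiftZ (- k) b) ((\<lambda>i. i + k) ` L))) L = b"
    using b by (auto simp: fun_eq_iff shiftZ_def restrict_def PiE_def extensional_def)
qed auto

lemma trans_inv_gibbs_spec: "trans_inv_spec (gibbs_spec Phi)"
  unfolding trans_inv_spec_def
  by (simp add: gibbs_spec_eq partition_function_translate hamiltonian_translate shiftZ_splice)

end

section \<open>Birkhoff sums of the potential\<close>

definition sets_with_min_in :: "int set \<Rightarrow> int set set" where
  "sets_with_min_in M = {W. finite W \<and> W \<noteq> {} \<and> Min W \<in> M}"

definition sets_through_above :: "int \<Rightarrow> int \<Rightarrow> int set set" where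
  "sets_through_above i a = {W. finite W \<and> i \<in> W \<and> W \<subseteq> {a..}}"

lemma sets_with_min_in_singleton: "sets_with_min_in {m} = sets_through_above m m"
  by (auto simp: sets_with_min_in_def sets_through_above_def intro: Min_eqI) (use Min_in in blast)

lemma sets_with_min_in_subset: "sets_with_min_in M \<subseteq> sets_meeting M"
  using Min_in by (fastforce simp: sets_with_min_in_def sets_meeting_def)

lemma sets_through_above_subset: "sets_through_above i a \<subseteq> sets_meeting {i}"
  by (auto simp: sets_through_above_def sets_meeting_def)

lemma sets_with_min_in_Int_sets_meeting:
  assumes "a \<le> i" "i \<le> b"
  shows "sets_with_min_in {a..b} \<inter> sets_meeting {i} = sets_through_above i a"
proof (intro equalityI subsetI)
  fix W assume "W \<in> sets_with_min_in {a..b} \<inter> sets_meeting {i}"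
  then show "W \<in> sets_through_above i a"
    by (auto simp: sets_with_min_in_def sets_meeting_def sets_through_above_def) (meson Min_le order_trans)
next
  fix W assume "W \<in> sets_through_above i a"
  then have W: "finite W" "i \<in> W" "W \<subseteq> {a..}" by (auto simp: sets_through_above_def)
  then have "a \<le> Min W" by (metis Min_in atLeast_iff empty_iff subsetD)
  moreover have "Min W \<le> b" using Min_le[OF W(1,2)] assms(2) by linarith
  ultimately show "W \<in> sets_with_min_in {a..b} \<inter> sets_meeting {i}"
    using W by (auto simp: sets_with_min_in_def sets_meeting_def)
qed

lemma sets_through_above_translate:
  "sets_through_above m m = (\<lambda>V. (\<lambda>i. i + m) ` V) ` sets_through_above 0 0"
proof (intro equalityI subsetI)
  fix W assume W: "W \<in> sets_through_above m m"
  have "W = (\<lambda>i. i + m) ` ((\<lambda>i. i - m) ` W)" by (auto simp: image_iff)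
  moreover have "(\<lambda>i. i - m) ` W \<in> sets_through_above 0 0"
    using W by (force simp: sets_through_above_def)
  ultimately show "W \<in> (\<lambda>V. (\<lambda>i. i + m) ` V) ` sets_through_above 0 0" by blast
qed (auto simp: sets_through_above_def)

context uac_interaction
begin

lemma infsum_sets_with_min_in:
  assumes "finite M"
  shows "infsum (\<lambda>W. Phi W x) (sets_with_min_in M) = (\<Sum>m\<in>M. infsum (\<lambda>W. Phi W x) (sets_with_min_in {m}))"
  using assms
proof (induction M rule: finite_induct)
  case empty
  then show ?case by (simp add: sets_with_min_in_def)
next
  case (insert m M)
  have "sets_with_min_in (insert m M) = sets_with_min_in {m} \<union> sets_with_min_in M"
    by (auto simp: sets_with_min_in_def)
  moreover have "sets_with_min_in {m} \<inter> sets_with_min_in M = {}"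
    using insert.hyps(2) by (auto simp: sets_with_min_in_def)
  moreover have "(\<lambda>W. Phi W x) summable_on sets_with_min_in N" if "finite N" for N
    using that sets_with_min_in_subset by (rule Phi_summable_on)
  ultimately show ?case
    using insert by (simp add: infsum_Un_disjoint)
qed

lemma infsum_Phi_update:
  assumes "finite L" "B \<subseteq> sets_meeting L"
  shows "infsum (\<lambda>V. Phi V (x(i := s))) B =
           infsum (\<lambda>V. Phi V (x(i := s))) (B \<inter> sets_meeting {i}) + infsum (\<lambda>V. Phi V x) (B - sets_meeting {i})"
proof -
  have "infsum (\<lambda>V. Phi V (x(i := s))) (B - sets_meeting {i}) = infsum (\<lambda>V. Phi V x) (B - sets_meeting {i})"
    by (intro infsum_cong Phi_cong) (use assms(2) in \<open>auto simp: sets_meeting_def\<close>)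
  moreover have "B - B \<inter> sets_meeting {i} = B - sets_meeting {i}" by blast
  ultimately show ?thesis
    using infsum_Phi_split[OF assms Int_lower1[of B "sets_meeting {i}"], of "x(i := s)"] by simp
qed

lemma supnorm_tail_sets_through_above:
  assumes "\<epsilon> > 0"
  obtains N where
    "\<And>n. N \<le> n \<Longrightarrow> infsum (\<lambda>V. supnorm (Phi V)) (sets_meeting {i} - sets_through_above i (- int n)) \<le> \<epsilon>"
proof -
  have "(\<lambda>V. supnorm (Phi V)) summable_on sets_meeting {i}"
    by (rule supnorm_summable_on[of "{i}"]) simp_all
  moreover have "supnorm (Phi V) \<ge> 0" if "V \<in> sets_meeting {i}" for V
    using that supnorm_nonneg by (simp add: sets_meeting_def)
  ultimately obtain F where F: "finite F" "F \<subseteq> sets_meeting {i}"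
    and tail: "\<And>B. B \<subseteq> sets_meeting {i} - F \<Longrightarrow> infsum (\<lambda>V. supnorm (Phi V)) B \<le> \<epsilon>"
    using summable_on_tail_bound[of "\<lambda>V. supnorm (Phi V)" "sets_meeting {i}" \<epsilon>] assms by blast
  have "finite (\<Union>F)" using F by (auto simp: sets_meeting_def)
  then obtain b where b: "\<And>j. j \<in> \<Union>F \<Longrightarrow> b \<le> j"
    using bdd_below_finite[of "\<Union>F"] unfolding bdd_below_def by blast
  have outside_F: "sets_meeting {i} - sets_through_above i (- int n) \<subseteq> sets_meeting {i} - F"
    if "nat (- b) \<le> n" for n
  proof
    fix W assume W: "W \<in> sets_meeting {i} - sets_through_above i (- int n)"
    then have "\<not> W \<subseteq> {- int n..}"
      by (auto simp: sets_meeting_def sets_through_above_def)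
    then obtain j where j: "j \<in> W" "j < - int n"
      by (auto simp: subset_eq not_le)
    have "W \<notin> F"
    proof
      assume "W \<in> F"
      with b j(1) have "b \<le> j" by blast
      with j(2) that show False by linarith
    qed
    with W show "W \<in> sets_meeting {i} - F" by blast
  qed
  show thesis
  proof (rule that)
    fix n assume "nat (- b) \<le> n"
    then show "infsum (\<lambda>V. supnorm (Phi V)) (sets_meeting {i} - sets_through_above i (- int n)) \<le> \<epsilon>"
      by (rule tail[OF outside_F])
  qed
qed

lemma uniform_limit_sets_through_above:
  "uniform_limit UNIV (\<lambda>n x. infsum (\<lambda>V. Phi V x) (sets_through_above i (- int n)))
     (hamiltonian Phi {i}) sequentially"
proof (rule uniform_limitI)
  fix \<epsilon> :: real assume "\<epsilon> > 0"
  then obtain N where N: "\<And>n. N \<le> n \<Longrightarrow>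
      infsum (\<lambda>V. supnorm (Phi V)) (sets_meeting {i} - sets_through_above i (- int n)) \<le> \<epsilon>/2"
    using supnorm_tail_sets_through_above[of "\<epsilon>/2"] by auto
  show "\<forall>\<^sub>F n in sequentially. \<forall>x\<in>UNIV. dist (infsum (\<lambda>V. Phi V x) (sets_through_above i (- int n)))
          (hamiltonian Phi {i} x) < \<epsilon>"
  proof (intro eventually_sequentiallyI[of N] ballI)
    fix n x assume "N \<le> n"
    define B where "B = sets_meeting {i} - sets_through_above i (- int n)"
    have "hamiltonian Phi {i} x =
        infsum (\<lambda>V. Phi V x) (sets_through_above i (- int n)) + infsum (\<lambda>V. Phi V x) B"
      unfolding hamiltonian_eq_infsum B_def
      by (rule infsum_Phi_split[of "{i}"]) (simp_all add: sets_through_above_subset)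
    moreover have "\<bar>infsum (\<lambda>V. Phi V x) B\<bar> \<le> \<epsilon>/2"
      using abs_infsum_Phi_le[of "{i}" B x] N[OF \<open>N \<le> n\<close>] unfolding B_def by simp
    ultimately show "dist (infsum (\<lambda>V. Phi V x) (sets_through_above i (- int n))) (hamiltonian Phi {i} x) < \<epsilon>"
      using \<open>\<epsilon> > 0\<close> by (simp add: dist_real_def)
  qed
qed

lemma infsum_sets_with_min_in_update:
  assumes "a \<le> i" "i \<le> b"
  shows "infsum (\<lambda>W. Phi W (x(i := s))) (sets_with_min_in {a..b}) =
           infsum (\<lambda>W. Phi W (x(i := s))) (sets_through_above i a) +
           infsum (\<lambda>W. Phi W x) (sets_with_min_in {a..b} - sets_meeting {i})"
  using infsum_Phi_update[OF _ sets_with_min_in_subset, of "{a..b}"]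
  by (simp add: sets_with_min_in_Int_sets_meeting[OF assms])

end

lemma image_int_minus_lessThan: "(\<lambda>k. int k - int p) ` {..<n} = {- int p..<int n - int p}"
proof (intro equalityI subsetI)
  fix j assume "j \<in> {- int p..<int n - int p}"
  then show "j \<in> (\<lambda>k. int k - int p) ` {..<n}"
    by (intro image_eqI[of _ _ "nat (j + int p)"]) auto
qed auto

lemma image_uminus_int_atMost: "(\<lambda>i. - int i) ` {..n} = {- int n..0}"
proof (intro equalityI subsetI)
  fix j assume "j \<in> {- int n..0}"
  then show "j \<in> (\<lambda>i. - int i) ` {..n}"
    by (intro image_eqI[of _ _ "nat (- j)"]) auto
qed auto

locale uac_potential = uac_interaction Phi for Phi :: "int set \<Rightarrow> (int \<Rightarrow> 'e::finite) \<Rightarrow> real" +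
  fixes phi :: "(nat \<Rightarrow> 'e) \<Rightarrow> real"
  assumes phi_eq: "\<And>x. phi x = - (\<Sum>\<^sub>\<infinity>V\<in>{V. finite V \<and> 0 \<in> V \<and> V \<subseteq> {0..}}. Phi V (\<lambda>i. x (nat i)))"
begin

lemma phi_translate: "phi (\<lambda>n. x (int n + m)) = - infsum (\<lambda>W. Phi W x) (sets_with_min_in {m})"
proof -
  have inj: "inj_on (\<lambda>V. (\<lambda>i. i + m) ` V) (sets_through_above 0 0)"
    by (intro inj_onI) (metis add_right_imp_eq inj_image_eq_iff inj_onI)
  have "infsum (\<lambda>W. Phi W x) (sets_with_min_in {m}) =
        infsum (\<lambda>V. Phi V (\<lambda>i. x (int (nat i) + m))) (sets_through_above 0 0)"
    unfolding sets_with_min_in_singleton sets_through_above_translate[of m] infsum_reindex[OF inj] o_def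
  proof (rule infsum_cong)
    fix V assume V: "V \<in> sets_through_above 0 0"
    then have "Phi ((\<lambda>i. i + m) ` V) x = Phi V (shiftZ m x)"
      by (simp add: Phi_translate sets_through_above_def)
    also have "\<dots> = Phi V (\<lambda>i. x (int (nat i) + m))"
      by (rule Phi_cong) (use V in \<open>auto simp: sets_through_above_def shiftZ_def\<close>)
    finally show "Phi ((\<lambda>i. i + m) ` V) x = Phi V (\<lambda>i. x (int (nat i) + m))" .
  qed
  then show ?thesis by (simp add: phi_eq sets_through_above_def)
qed

lemma Ssum_window: "Ssum phi n (window y p) = - infsum (\<lambda>W. Phi W y) (sets_with_min_in {- int p..<int n - int p})"
proof -
  have "shiftN k (window y p) = (\<lambda>m. y (int m + (int k - int p)))" for k
    by (simp add: shiftN_def window_def algebra_simps)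
  then have "Ssum phi n (window y p) = - (\<Sum>k<n. infsum (\<lambda>W. Phi W y) (sets_with_min_in {int k - int p}))"
    by (simp add: Ssum_def phi_translate sum_negf)
  also have "\<dots> = - (\<Sum>j\<in>{- int p..<int n - int p}. infsum (\<lambda>W. Phi W y) (sets_with_min_in {j}))"
    unfolding image_int_minus_lessThan[symmetric] by (subst sum.reindex) (auto simp: inj_on_def)
  finally show ?thesis
    by (simp add: infsum_sets_with_min_in[of "{- int p..<int n - int p}"])
qed

lemma sum_phi_ins_str:
  "(\<Sum>i\<le>n. phi (ins_str x i c)) = - infsum (\<lambda>W. Phi W (x(0 := c))) (sets_with_min_in {- int n..0})"
proof -
  have "ins_str x i c = (\<lambda>m. (x(0 := c)) (int m + - int i))" for i
    by (auto simp: ins_str_def)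
  then have "phi (ins_str x i c) = - infsum (\<lambda>W. Phi W (x(0 := c))) (sets_with_min_in {- int i})" for i
    by (simp only: phi_translate)
  then have "(\<Sum>i\<le>n. phi (ins_str x i c)) = - (\<Sum>i\<le>n. infsum (\<lambda>W. Phi W (x(0 := c))) (sets_with_min_in {- int i}))"
    by (simp add: sum_negf)
  also have "\<dots> = - (\<Sum>j\<in>{- int n..0}. infsum (\<lambda>W. Phi W (x(0 := c))) (sets_with_min_in {j}))"
    unfolding image_uminus_int_atMost[symmetric] by (subst sum.reindex) (auto simp: inj_on_def)
  finally show ?thesis
    by (simp add: infsum_sets_with_min_in[of "{- int n..0}"])
qed

lemma extensible_phi: "extensible phi"
  unfolding extensible_def uniformly_convergent_on_def
proof (intro allI exI)
  fix a0 b0 :: 'e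
  define T where "T n y = infsum (\<lambda>W. Phi W y) (sets_through_above 0 (- int n))" for n y
  have "(\<Sum>i\<le>n. phi (ins_str x i c)) =
          - (T n (x(0 := c)) + infsum (\<lambda>W. Phi W x) (sets_with_min_in {- int n..0} - sets_meeting {0}))"
    for n x c
    unfolding sum_phi_ins_str T_def by (simp add: infsum_sets_with_min_in_update)
  then have partial_sums: "(\<Sum>i\<le>n. phi (ins_str x i b0) - phi (ins_str x i a0)) = T n (x(0 := a0)) - T n (x(0 := b0))"
    for n x
    by (simp add: sum_subtractf)
  have "uniform_limit UNIV (\<lambda>n x. T n (x(0 := c))) (\<lambda>x. hamiltonian Phi {0} (x(0 := c))) sequentially" for c
    unfolding T_def by (rule uniform_limit_compose'[OF uniform_limit_sets_through_above]) simp
  then show "uniform_limit UNIV (\<lambda>n x. \<Sum>i\<le>n. phi (ins_str x i b0) - phi (ins_str x i a0))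
      (\<lambda>x. hamiltonian Phi {0} (x(0 := a0)) - hamiltonian Phi {0} (x(0 := b0))) sequentially"
    unfolding partial_sums by (intro uniform_limit_minus)
qed

lemma ss_approx_tendsto_gibbs_spec: "ss_approx phi i (w i) e \<longlonglongrightarrow> gibbs_spec Phi {i} w e"
proof -
  define t where "t s p = infsum (\<lambda>W. Phi W (e(i := s))) (sets_through_above i (- int p))" for s p
  have ss_approx_eq: "ss_approx phi i s e p = exp (- t s p) / (\<Sum>s'\<in>UNIV. exp (- t s' p))"
    if "- int p \<le> i" for p s
  proof -
    define R where "R = infsum (\<lambda>W. Phi W e) (sets_with_min_in {- int p..i} - sets_meeting {i})"
    have "{- int p..<int (nat (i + int p + 1)) - int p} = {- int p..i}"
      using that by auto
    then have "exp (Ssum phi (nat (i + int p + 1)) (window (e(i := s')) p)) = exp (- t s' p) * exp (- R)" for s'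
      using that by (simp add: Ssum_window infsum_sets_with_min_in_update t_def R_def flip: exp_add)
    then have "ss_approx phi i s e p = exp (- t s p) * exp (- R) / ((\<Sum>s'\<in>UNIV. exp (- t s' p)) * exp (- R))"
      unfolding ss_approx_def sum_distrib_right by (simp only:)
    then show ?thesis by simp
  qed
  have "(\<Sum>s\<in>UNIV. exp (- hamiltonian Phi {i} (e(i := s)))) > 0"
    by (rule sum_pos) auto
  moreover have "t s \<longlonglongrightarrow> hamiltonian Phi {i} (e(i := s))" for s
    unfolding t_def by (rule tendsto_uniform_limitI[OF uniform_limit_sets_through_above]) simp
  ultimately have "(\<lambda>p. exp (- t (w i) p) / (\<Sum>s'\<in>UNIV. exp (- t s' p))) \<longlonglongrightarrow>
      exp (- hamiltonian Phi {i} (e(i := w i))) / (\<Sum>s'\<in>UNIV. exp (- hamiltonian Phi {i} (e(i := s'))))"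
    by (intro tendsto_intros) auto
  moreover have "\<forall>\<^sub>F p in sequentially. exp (- t (w i) p) / (\<Sum>s'\<in>UNIV. exp (- t s' p)) = ss_approx phi i (w i) e p"
    by (rule eventually_sequentiallyI[of "nat (- i)"]) (simp add: ss_approx_eq)
  ultimately show ?thesis
    unfolding gibbs_spec_singleton by (rule Lim_transform_eventually)
qed

lemma rev_spec_eq_gibbs_spec: "rev_spec phi = gibbs_spec Phi"
  unfolding rev_spec_def
proof (rule the_equality)
  show "is_spec (gibbs_spec Phi) \<and> quasilocal_spec (gibbs_spec Phi) \<and> nonnull_spec (gibbs_spec Phi) \<and>
      trans_inv_spec (gibbs_spec Phi) \<and>
      (\<forall>i w e. (ss_approx phi i (w i) e \<longlongrightarrow> gibbs_spec Phi {i} w e) sequentially)"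
    using is_spec_gibbs_spec quasilocal_gibbs_spec nonnull_gibbs_spec trans_inv_gibbs_spec
      ss_approx_tendsto_gibbs_spec by blast
next
  fix gam
  assume gam: "is_spec gam \<and> quasilocal_spec gam \<and> nonnull_spec gam \<and> trans_inv_spec gam \<and>
      (\<forall>i w e. (ss_approx phi i (w i) e \<longlongrightarrow> gam {i} w e) sequentially)"
  show "gam = gibbs_spec Phi"
  proof (rule nonnull_spec_eqI)
    show "gam {i} w e = gibbs_spec Phi {i} w e" for i w e
      using gam ss_approx_tendsto_gibbs_spec LIMSEQ_unique by blast
  qed (use gam is_spec_gibbs_spec nonnull_gibbs_spec in auto)
qed

end

theorem mainTheorem5:
  fixes phi :: "(nat \<Rightarrow> 'e::finite) \<Rightarrow> real"
    and Phi :: "int set \<Rightarrow> (int \<Rightarrow> 'e) \<Rightarrow> real"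
  assumes "continuous_map prodtop_pos euclideanreal phi"
    and "is_interaction Phi" and "uac Phi" and "trans_inv_interaction Phi"
    and "\<And>x. phi x = - (\<Sum>\<^sub>\<infinity>V\<in>{V. finite V \<and> 0 \<in> V \<and> V \<subseteq> {0..}}. Phi V (\<lambda>i. x (nat i)))"
  shows "extensible phi \<and> rev_spec phi = gibbs_spec Phi"
proof -
  interpret uac_potential Phi phi
    using assms(2-5) by unfold_locales
  show ?thesis
    using extensible_phi rev_spec_eq_gibbs_spec by simp
qed

end
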